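(* Let $X$ be an Alexandroff $T_0$-space and let $\varphi:\mathbb{R}\times X\rightarrow X$ be a flow. Then $\varphi$ is trivial, i.e. $\varphi(t,x)=x$ for every $t\in\mathbb{R}$ and every $x\in X$.
   Context: An Alexandroff space is a topological space in which arbitrary intersections of open sets are open. A flow on a topological space $X$ is a continuous map $\varphi:\mathbb{R}\times X\to X$ (with $\mathbb{R}$ carrying its usual topology and $\mathbb{R}\times X$ the product topology) such that $\varphi(0,x)=x$ and $\varphi(s+t,x)=\varphi(s,\varphi(t,x))$ for all $s,t\in\mathbb{R}$, $x\in X$. *)

theory Defs
  imports "HOL-Analysis.Analysis"
begin

text \<open>Alexandroff space: arbitrary intersections of open sets are open
 (intersections taken inside the space, so the empty family gives the whole space).\<close>
definition alexandroff_space :: "'a topology \<Rightarrow> bool" where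
  "alexandroff_space X \<longleftrightarrow>
     (\<forall>\<U>. (\<forall>U\<in>\<U>. openin X U) \<longrightarrow> openin X (topspace X \<inter> \<Inter>\<U>))"

definition is_flow :: "'a topology \<Rightarrow> (real \<times> 'a \<Rightarrow> 'a) \<Rightarrow> bool" where
  "is_flow X \<phi> \<longleftrightarrow>
     continuous_map (prod_topology euclideanreal X) X \<phi> \<and>
     (\<forall>x\<in>topspace X. \<phi> (0, x) = x) \<and>
     (\<forall>s t. \<forall>x\<in>topspace X. \<phi> (s + t, x) = \<phi> (s, \<phi> (t, x)))"

end

theory Submission
  imports Defs
begin

text \<open>Write \<open>x \<in> X closure_of {y}\<close> as \<open>y \<preceq> x\<close>: every open set containing \<open>x\<close>
  contains \<open>y\<close>. In an Alexandroff space the set of all \<open>y \<preceq> x\<close> is the smallest open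
  neighbourhood of \<open>x\<close>, so by continuity \<open>y\<^sub>s = \<phi>(s, x)\<close> and \<open>\<phi>(-s, x)\<close> satisfy
  \<open>y\<^sub>s \<preceq> x\<close> and \<open>\<phi>(-s, x) \<preceq> x\<close> for all small \<open>|s|\<close>. Applying the continuous map
  \<open>\<phi>(s, -)\<close> to the second relation gives \<open>x \<preceq> y\<^sub>s\<close>, and \<open>T\<^sub>0\<close> forces \<open>y\<^sub>s = x\<close>. A point
  fixed for all small times is fixed for all times, since these generate \<open>\<real>\<close>.\<close>

lemma alexandroff_openin_generizations:
  assumes "alexandroff_space X"
  shows "openin X {y \<in> topspace X. x \<in> X closure_of {y}}"
proof (cases "x \<in> topspace X")
  case True
  have "{y \<in> topspace X. x \<in> X closure_of {y}} = topspace X \<inter> \<Inter>{V. openin X V \<and> x \<in> V}"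
    using True by (auto simp: in_closure_of)
  moreover have "openin X (topspace X \<inter> \<Inter>{V. openin X V \<and> x \<in> V})"
    using assms unfolding alexandroff_space_def
    by (rule allE[of _ "{V. openin X V \<and> x \<in> V}"]) simp
  ultimately show ?thesis
    by (simp only:)
next
  case False
  then have "{y \<in> topspace X. x \<in> X closure_of {y}} = {}"
    by (auto simp: in_closure_of)
  then show ?thesis
    by (simp only: openin_empty)
qed

lemma t0_space_closure_of_sing_antisym:
  assumes "t0_space X" "x \<in> X closure_of {y}" "y \<in> X closure_of {x}"
  shows "x = y"
proof -
  have "X closure_of {x} \<subseteq> X closure_of {y}" "X closure_of {y} \<subseteq> X closure_of {x}"
    using assms(2,3) by (simp_all add: closure_of_minimal)
  then have "X closure_of {x} = X closure_of {y}"
    by (rule subset_antisym)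
  moreover have "x \<in> topspace X" "y \<in> topspace X"
    using assms(2,3) by (simp_all add: in_closure_of)
  ultimately show ?thesis
    using assms(1) unfolding t0_space_closure_of_sing by blast
qed

lemma continuous_map_closure_of_sing:
  assumes "continuous_map X Y f" "x \<in> X closure_of {y}"
  shows "f x \<in> Y closure_of {f y}"
  using continuous_map_image_closure_subset[OF assms(1), of "{y}"] assms(2) by auto

lemma is_flow_continuous_map_time:
  assumes "is_flow X \<phi>"
  shows "continuous_map X X (\<lambda>z. \<phi> (s, z))"
  using assms unfolding is_flow_def
  by (auto intro!: continuous_map_compose[of X _ "\<lambda>z. (s, z)" X \<phi>, unfolded o_def]
      continuous_map_pairedI)

lemma is_flow_continuous_map_orbit:
  assumes "is_flow X \<phi>" "x \<in> topspace X"
  shows "continuous_map euclideanreal X (\<lambda>t. \<phi> (t, x))"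
  using assms unfolding is_flow_def
  by (auto intro!: continuous_map_compose[of euclideanreal _ "\<lambda>t. (t, x)" X \<phi>, unfolded o_def]
      continuous_map_pairedI)

lemma is_flow_fixed_if_fixed_near_zero:
  assumes flow: "is_flow X \<phi>" and x: "x \<in> topspace X" and "e > 0"
    and near: "\<And>s. \<bar>s\<bar> < e \<Longrightarrow> \<phi> (s, x) = x"
  shows "\<phi> (t, x) = x"
proof -
  have zero: "\<phi> (0, x) = x" and add: "\<And>s t. \<phi> (s + t, x) = \<phi> (s, \<phi> (t, x))"
    using flow x unfolding is_flow_def by auto
  obtain n :: nat where n: "\<bar>t\<bar> / e < real n"
    using reals_Archimedean2 by blast
  then have "n > 0"
    using \<open>e > 0\<close> by (cases n) (auto simp: divide_less_0_iff)
  define s where "s = t / real n"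
  have "\<bar>s\<bar> < e"
    using n \<open>n > 0\<close> \<open>e > 0\<close> by (auto simp: s_def field_simps abs_divide)
  then have step: "\<phi> (s, x) = x"
    by (rule near)
  have "\<phi> (real k * s, x) = x" for k :: nat
  proof (induction k)
    case 0
    show ?case using zero by simp
  next
    case (Suc k)
    have "\<phi> (real (Suc k) * s, x) = \<phi> (s, \<phi> (real k * s, x))"
      by (simp add: algebra_simps flip: add)
    then show ?case using Suc step by simp
  qed
  from this[of n] show ?thesis
    using \<open>n > 0\<close> by (simp add: s_def)
qed

lemma alexandroff_flow_generizes_near_zero:
  assumes "alexandroff_space X" "is_flow X \<phi>" "x \<in> topspace X"
  obtains e where "e > 0" "\<And>s. \<bar>s\<bar> < e \<Longrightarrow> x \<in> X closure_of {\<phi> (s, x)}"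
proof -
  let ?U = "{y \<in> topspace X. x \<in> X closure_of {y}}"
  have "openin euclideanreal {s \<in> topspace euclideanreal. \<phi> (s, x) \<in> ?U}"
    by (rule openin_continuous_map_preimage[OF is_flow_continuous_map_orbit[OF assms(2,3)]
          alexandroff_openin_generizations[OF assms(1)]])
  then have "open {s. \<phi> (s, x) \<in> ?U}"
    by simp
  moreover have "\<phi> (0, x) = x"
    using assms(2,3) unfolding is_flow_def by auto
  then have "0 \<in> {s. \<phi> (s, x) \<in> ?U}"
    using assms(3) by (auto simp: in_closure_of)
  ultimately obtain e where "e > 0" and ball: "ball 0 e \<subseteq> {s. \<phi> (s, x) \<in> ?U}"
    by (meson open_contains_ball)
  show ?thesis
  proof (rule that[OF \<open>e > 0\<close>])
    show "x \<in> X closure_of {\<phi> (s, x)}" if "\<bar>s\<bar> < e" for s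
      using ball that by (auto simp: subset_iff dist_norm)
  qed
qed

theorem mainTheorem4:
  fixes X :: "'a topology" and \<phi> :: "real \<times> 'a \<Rightarrow> 'a"
  assumes "alexandroff_space X" and "t0_space X" and "is_flow X \<phi>"
  shows "\<forall>t. \<forall>x\<in>topspace X. \<phi> (t, x) = x"
proof (intro allI ballI)
  fix t x assume x: "x \<in> topspace X"
  obtain e where "e > 0" and near: "\<And>s. \<bar>s\<bar> < e \<Longrightarrow> x \<in> X closure_of {\<phi> (s, x)}"
    using alexandroff_flow_generizes_near_zero[OF assms(1,3) x] by blast
  have inverse: "\<phi> (s, \<phi> (-s, x)) = x" for s
    using assms(3) x unfolding is_flow_def by (metis add.right_inverse)
  have "\<phi> (s, x) = x" if "\<bar>s\<bar> < e" for s
  proof (rule sym, rule t0_space_closure_of_sing_antisym[OF assms(2)])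
    show "x \<in> X closure_of {\<phi> (s, x)}"
      using near that .
    have "x \<in> X closure_of {\<phi> (-s, x)}"
      using near that by simp
    then have "\<phi> (s, x) \<in> X closure_of {\<phi> (s, \<phi> (-s, x))}"
      by (rule continuous_map_closure_of_sing[OF is_flow_continuous_map_time[OF assms(3)]])
    then show "\<phi> (s, x) \<in> X closure_of {x}"
      by (simp only: inverse)
  qed
  then show "\<phi> (t, x) = x"
    by (rule is_flow_fixed_if_fixed_near_zero[OF assms(3) x \<open>e > 0\<close>])
qed

end
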